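(* Let $S$ be an $a$-cap free and $b$-cup free configuration with a fixed slope labeling $s$, and let $\alpha_i(p)$ ($p \in S$, $1 \le i \le a-2$) be its $\alpha$-statistic. Then: (1) for every point $p$, $1 \leq \alpha_1(p) \leq \alpha_2(p) \leq \cdots \leq \alpha_{a-2}(p) \leq b-1$; consequently $\alpha = (\alpha_1,\dots,\alpha_{a-2})$ is a map from $S$ to $T_{a,b} = \{(x_1,\dots,x_{a-2}) \in \mathbb{N}^{a-2} : 1 \le x_1 \le \cdots \le x_{a-2} \le b-1\}$; (2) for any two points $x<y$ of $S$ such that $s(xy)=i$, we have $\alpha_i(x) < \alpha_i(y)$; in particular the map $\alpha$ is injective.
   Context: A configuration is a finite set $S$ of points with a linear order $<$ and, for every $3$-element subset, an arbitrary assignment declaring it either a cap or a cup. Points $x_1<\cdots<x_a$ form an $a$-cup (resp. $a$-cap) if every consecutive triple $\{x_{i-1},x_i,x_{i+1}\}$, $1<i<a$, is assigned cup (resp. cap); $1$- and $2$-element sets are both caps and cups. The length (size) of a cup is its number of points; a cup $x_1\cdots x_a$ with $a\ge2$ ends with the point $x_a$ and the edge $x_{a-1}x_a$. $S$ is $a$-cap free (resp. $b$-cup free) if it contains no $a$-cap (resp. $b$-cup). An edge is a pair $x<y$, written $xy$. A slope labeling of an $a$-cap free configuration $S$ is an assignment of an integer $s(xy)\in\{1,\dots,a-2\}$ to every edge such that for any $x<y<z$, $s(xy)\le s(yz)$ implies $\{x,y,z\}$ is a $3$-cup. The $\alpha$-statistic: for $p \in S$ and $1\le i\le a-2$, $\alpha_i(p)$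 is the maximum length of a cup that ends with the point $p$ and with an edge of label $\le i$; if there is no such cup, $\alpha_i(p)=1$. *)

theory Defs
  imports Main
begin

text \<open>A configuration: a finite set S of points of a linearly ordered type, together with
  a predicate cup on triples; for x < y < z the triple {x,y,z} is a cup iff cup x y z,
  and a cap otherwise (an arbitrary assignment).\<close>

definition is_cup :: "'a::linorder set \<Rightarrow> ('a \<Rightarrow> 'a \<Rightarrow> 'a \<Rightarrow> bool) \<Rightarrow> 'a list \<Rightarrow> bool" where
  "is_cup S cup xs \<longleftrightarrow> sorted_wrt (<) xs \<and> set xs \<subseteq> S \<and>
     (\<forall>k. k + 2 < length xs \<longrightarrow> cup (xs ! k) (xs ! (k+1)) (xs ! (k+2)))"

definition is_cap :: "'a::linorder set \<Rightarrow> ('a \<Rightarrow> 'a \<Rightarrow> 'a \<Rightarrow> bool) \<Rightarrow> 'a list \<Rightarrow> bool" where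
  "is_cap S cup xs \<longleftrightarrow> sorted_wrt (<) xs \<and> set xs \<subseteq> S \<and>
     (\<forall>k. k + 2 < length xs \<longrightarrow> \<not> cup (xs ! k) (xs ! (k+1)) (xs ! (k+2)))"

definition cap_free :: "'a::linorder set \<Rightarrow> ('a \<Rightarrow> 'a \<Rightarrow> 'a \<Rightarrow> bool) \<Rightarrow> nat \<Rightarrow> bool" where
  "cap_free S cup a \<longleftrightarrow> \<not> (\<exists>xs. is_cap S cup xs \<and> length xs = a)"

definition cup_free :: "'a::linorder set \<Rightarrow> ('a \<Rightarrow> 'a \<Rightarrow> 'a \<Rightarrow> bool) \<Rightarrow> nat \<Rightarrow> bool" where
  "cup_free S cup b \<longleftrightarrow> \<not> (\<exists>xs. is_cup S cup xs \<and> length xs = b)"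

definition slope_labeling ::
  "'a::linorder set \<Rightarrow> ('a \<Rightarrow> 'a \<Rightarrow> 'a \<Rightarrow> bool) \<Rightarrow> nat \<Rightarrow> ('a \<Rightarrow> 'a \<Rightarrow> nat) \<Rightarrow> bool" where
  "slope_labeling S cup a s \<longleftrightarrow>
     (\<forall>x\<in>S. \<forall>y\<in>S. x < y \<longrightarrow> 1 \<le> s x y \<and> s x y \<le> a - 2) \<and>
     (\<forall>x\<in>S. \<forall>y\<in>S. \<forall>z\<in>S. x < y \<and> y < z \<and> s x y \<le> s y z \<longrightarrow> cup x y z)"

definition alpha ::
  "'a::linorder set \<Rightarrow> ('a \<Rightarrow> 'a \<Rightarrow> 'a \<Rightarrow> bool) \<Rightarrow> ('a \<Rightarrow> 'a \<Rightarrow> nat) \<Rightarrow> nat \<Rightarrow> 'a \<Rightarrow> nat" where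
  "alpha S cup s i p = Max ({length xs | xs. is_cup S cup xs \<and> length xs \<ge> 2 \<and> last xs = p \<and>
        s (xs ! (length xs - 2)) p \<le> i} \<union> {1})"

definition T_set :: "nat \<Rightarrow> nat \<Rightarrow> nat list set" where
  "T_set a b = {xs. length xs = a - 2 \<and> sorted xs \<and> (\<forall>x\<in>set xs. 1 \<le> x \<and> x \<le> b - 1)}"

definition alpha_vec ::
  "'a::linorder set \<Rightarrow> ('a \<Rightarrow> 'a \<Rightarrow> 'a \<Rightarrow> bool) \<Rightarrow> ('a \<Rightarrow> 'a \<Rightarrow> nat) \<Rightarrow> nat \<Rightarrow> 'a \<Rightarrow> nat list" where
  "alpha_vec S cup s a p = map (\<lambda>i. alpha S cup s i p) [1..<a - 1]"

end

theory Submission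
  imports Defs
begin

text \<open>The bounds on \<open>\<alpha>\<close> are bookkeeping: cups have fewer than \<open>b\<close> points, and allowing
  larger labels can only enlarge the set of admissible cups. The heart of the matter is
  strictness along an edge \<open>xy\<close> of label \<open>i\<close>: take a longest cup \<open>\<dots>wx\<close> counted by
  \<open>\<alpha>\<^sub>i(x)\<close>; since \<open>s(wx) \<le> i = s(xy)\<close>, the slope labeling makes \<open>wxy\<close> a cup, so appending
  \<open>y\<close> gives a longer cup counted by \<open>\<alpha>\<^sub>i(y)\<close>. Injectivity follows because two points
  \<open>x < y\<close> already differ in the coordinate \<open>s(xy)\<close>.\<close>

lemma is_cup_take: "is_cup S cup xs \<Longrightarrow> is_cup S cup (take n xs)"
  unfolding is_cup_def by (auto simp: sorted_wrt_take dest: in_set_takeD)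

lemma is_cup_snoc:
  assumes "is_cup S cup (ys @ [w, x])" "x < y" "y \<in> S" "cup w x y"
  shows "is_cup S cup (ys @ [w, x, y])"
proof -
  have sorted: "sorted_wrt (<) (ys @ [w, x])" and in_S: "set (ys @ [w, x]) \<subseteq> S"
    and cups: "\<And>k. k + 2 < length ys + 2 \<Longrightarrow>
      cup ((ys @ [w, x]) ! k) ((ys @ [w, x]) ! (k + 1)) ((ys @ [w, x]) ! (k + 2))"
    using assms(1) unfolding is_cup_def by auto
  have "sorted_wrt (<) (ys @ [w, x, y])"
    using sorted assms(2) by (auto simp: sorted_wrt_append)
  moreover have "cup ((ys @ [w, x, y]) ! k) ((ys @ [w, x, y]) ! (k + 1)) ((ys @ [w, x, y]) ! (k + 2))"
    if "k + 2 < length ys + 3" for k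
  proof (cases "k < length ys")
    case True
    have "(ys @ [w, x, y]) ! j = (ys @ [w, x]) ! j" if "j \<le> k + 2" for j
      using that True nth_append_left[of j "ys @ [w, x]" "[y]"] by simp
    then show ?thesis using cups[of k] True by simp
  next
    case False
    then have "k = length ys" using that by simp
    then show ?thesis using assms(4) by (simp add: nth_append)
  qed
  ultimately show ?thesis
    using in_S assms(3) unfolding is_cup_def by simp
qed

lemma cup_free_length_less:
  assumes "cup_free S cup b" "is_cup S cup xs"
  shows "length xs < b"
proof (rule ccontr)
  assume "\<not> length xs < b"
  then have "length (take b xs) = b" by simp
  with is_cup_take[OF assms(2)] assms(1) show False unfolding cup_free_def by blast
qed

lemma is_cup_length_le_card:
  assumes "finite S" "is_cup S cup xs"
  shows "length xs \<le> card S"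
proof -
  have "length xs = card (set xs)"
    using assms(2) unfolding is_cup_def by (simp add: strict_sorted_iff distinct_card)
  also have "\<dots> \<le> card S"
    using assms unfolding is_cup_def by (simp add: card_mono)
  finally show ?thesis .
qed

lemma length_ge_2_snoc2:
  assumes "2 \<le> length xs"
  obtains ys w x where "xs = ys @ [w, x]"
proof -
  obtain zs x where "xs = zs @ [x]" using assms by (cases xs rule: rev_cases) auto
  moreover obtain ys w where "zs = ys @ [w]" using assms calculation by (cases zs rule: rev_cases) auto
  ultimately show ?thesis using that by simp
qed

text \<open>The set defining \<open>alpha\<close>, with each cup written as \<open>ys @ [w, p]\<close> so that its last
  edge \<open>wp\<close> is visible without index arithmetic.\<close>

definition cup_lengths_ending ::
  "'a::linorder set \<Rightarrow> ('a \<Rightarrow> 'a \<Rightarrow> 'a \<Rightarrow> bool) \<Rightarrow> ('a \<Rightarrow> 'a \<Rightarrow> nat) \<Rightarrow> nat \<Rightarrow> 'a \<Rightarrow> nat set" where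
  "cup_lengths_ending S cup s i p =
     {length ys + 2 | ys w. is_cup S cup (ys @ [w, p]) \<and> s w p \<le> i}"

lemma alpha_eq_Max_cup_lengths_ending:
  "alpha S cup s i p = Max (cup_lengths_ending S cup s i p \<union> {1})"
proof -
  have "{length xs | xs. is_cup S cup xs \<and> 2 \<le> length xs \<and> last xs = p \<and>
          s (xs ! (length xs - 2)) p \<le> i} = cup_lengths_ending S cup s i p" (is "?L = ?R")
  proof
    show "?L \<subseteq> ?R"
    proof
      fix n assume "n \<in> ?L"
      then obtain xs where xs: "n = length xs" "is_cup S cup xs" "2 \<le> length xs" "last xs = p"
          "s (xs ! (length xs - 2)) p \<le> i"
        by blast
      obtain ys w x where "xs = ys @ [w, x]" using xs(3) by (rule length_ge_2_snoc2)
      with xs show "n \<in> ?R"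
        unfolding cup_lengths_ending_def by (auto simp: nth_append)
    qed
    show "?R \<subseteq> ?L"
    proof
      fix n assume "n \<in> ?R"
      then obtain ys w where "n = length (ys @ [w, p])" "is_cup S cup (ys @ [w, p])" "s w p \<le> i"
        unfolding cup_lengths_ending_def by auto
      moreover have "(ys @ [w, p]) ! (length (ys @ [w, p]) - 2) = w"
        by (simp add: nth_append)
      ultimately show "n \<in> ?L" by fastforce
    qed
  qed
  then show ?thesis unfolding alpha_def by (rule arg_cong)
qed

lemma finite_cup_lengths_ending:
  assumes "finite S"
  shows "finite (cup_lengths_ending S cup s i p)"
proof (rule finite_subset)
  show "cup_lengths_ending S cup s i p \<subseteq> {..card S}"
    using is_cup_length_le_card[OF assms] unfolding cup_lengths_ending_def by fastforce
qed simp

lemma alpha_ge_1: "finite S \<Longrightarrow> 1 \<le> alpha S cup s i p"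
  unfolding alpha_eq_Max_cup_lengths_ending
  by (simp add: finite_cup_lengths_ending)

lemma length_le_alpha:
  assumes "finite S" "is_cup S cup (ys @ [w, p])" "s w p \<le> i"
  shows "length ys + 2 \<le> alpha S cup s i p"
  unfolding alpha_eq_Max_cup_lengths_ending
  by (rule Max_ge) (use assms finite_cup_lengths_ending in \<open>auto simp: cup_lengths_ending_def\<close>)

lemma cup_lengths_ending_mono:
  "i \<le> j \<Longrightarrow> cup_lengths_ending S cup s i p \<subseteq> cup_lengths_ending S cup s j p"
  unfolding cup_lengths_ending_def by (blast intro: le_trans)

lemma alpha_mono:
  assumes "finite S" "i \<le> j"
  shows "alpha S cup s i p \<le> alpha S cup s j p"
  unfolding alpha_eq_Max_cup_lengths_ending
  by (rule Max_mono)
    (use finite_cup_lengths_ending[OF assms(1)] cup_lengths_ending_mono[OF assms(2), of S cup s p]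
      in auto)

lemma alpha_cases:
  assumes "finite S"
  obtains "alpha S cup s i p = 1"
  | ys w where "is_cup S cup (ys @ [w, p])" "s w p \<le> i" "alpha S cup s i p = length ys + 2"
proof -
  have "alpha S cup s i p \<in> cup_lengths_ending S cup s i p \<union> {1}"
    unfolding alpha_eq_Max_cup_lengths_ending
    by (rule Max_in) (simp_all add: finite_cup_lengths_ending assms)
  then show ?thesis using that unfolding cup_lengths_ending_def by auto
qed

lemma alpha_le_pred:
  assumes "finite S" "cup_free S cup b" "p \<in> S"
  shows "alpha S cup s i p \<le> b - 1"
proof (cases rule: alpha_cases[OF assms(1), of cup s i p])
  case 1
  have "is_cup S cup [p]" using assms(3) unfolding is_cup_def by simp
  then have "1 < b" using cup_free_length_less[OF assms(2), of "[p]"] by simp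
  with 1 show ?thesis by simp
next
  case (2 ys w)
  then show ?thesis using cup_free_length_less[OF assms(2) 2(1)] by simp
qed

lemma alpha_less_along_edge:
  assumes "finite S" "slope_labeling S cup a s" "x \<in> S" "y \<in> S" "x < y"
  shows "alpha S cup s (s x y) x < alpha S cup s (s x y) y"
proof (cases rule: alpha_cases[OF assms(1), of cup s "s x y" x])
  case 1
  have "is_cup S cup ([] @ [x, y])" using assms(3-5) unfolding is_cup_def by simp
  from length_le_alpha[OF assms(1) this, of s "s x y"] 1 show ?thesis by simp
next
  case (2 ys w)
  have "w \<in> S" "w < x"
    using 2(1) unfolding is_cup_def by (simp_all add: sorted_wrt_append)
  then have "cup w x y" using 2(2) assms(2-5) unfolding slope_labeling_def by blast
  with is_cup_snoc[OF 2(1) assms(5,4)] have "is_cup S cup ((ys @ [w]) @ [x, y])" by simp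
  from length_le_alpha[OF assms(1) this, of s "s x y"] 2(3) show ?thesis by simp
qed

lemma alpha_vec_nth:
  assumes "1 \<le> i" "i \<le> a - 2"
  shows "alpha_vec S cup s a p ! (i - 1) = alpha S cup s i p"
proof -
  have "[1..<a - 1] ! (i - 1) = i" using assms by (subst nth_upt) auto
  then show ?thesis using assms unfolding alpha_vec_def by simp
qed

lemma alpha_vec_in_T_set:
  assumes "finite S" "cup_free S cup b" "p \<in> S"
  shows "alpha_vec S cup s a p \<in> T_set a b"
proof -
  have "sorted (alpha_vec S cup s a p)"
    unfolding alpha_vec_def sorted_map
    by (rule sorted_wrt_mono_rel[OF _ sorted_upt]) (simp add: alpha_mono[OF assms(1)])
  then show ?thesis
    unfolding T_set_def alpha_vec_def using alpha_ge_1[OF assms(1)] alpha_le_pred[OF assms] by auto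
qed

lemma inj_on_alpha_vec:
  assumes "finite S" "slope_labeling S cup a s"
  shows "inj_on (alpha_vec S cup s a) S"
proof -
  have differ: "alpha_vec S cup s a x \<noteq> alpha_vec S cup s a y" if "x \<in> S" "y \<in> S" "x < y" for x y
  proof -
    have "1 \<le> s x y" "s x y \<le> a - 2" using assms(2) that unfolding slope_labeling_def by auto
    then have "alpha_vec S cup s a x ! (s x y - 1) < alpha_vec S cup s a y ! (s x y - 1)"
      using alpha_less_along_edge[OF assms that] alpha_vec_nth[of "s x y" a S cup s] by simp
    then show ?thesis by auto
  qed
  show ?thesis
  proof (rule inj_onI)
    fix x y assume "x \<in> S" "y \<in> S" "alpha_vec S cup s a x = alpha_vec S cup s a y"
    then show "x = y" by (cases x y rule: linorder_cases) (auto dest: differ)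
  qed
qed

theorem theorem3p6:
  fixes S :: "'a::linorder set" and cup :: "'a \<Rightarrow> 'a \<Rightarrow> 'a \<Rightarrow> bool"
    and s :: "'a \<Rightarrow> 'a \<Rightarrow> nat" and a b :: nat
  assumes "finite S"
    and "cap_free S cup a" and "cup_free S cup b"
    and "slope_labeling S cup a s"
  shows "(\<forall>p\<in>S. (\<forall>i. 1 \<le> i \<and> i \<le> a - 2 \<longrightarrow> 1 \<le> alpha S cup s i p \<and> alpha S cup s i p \<le> b - 1)
              \<and> (\<forall>i j. 1 \<le> i \<and> i \<le> j \<and> j \<le> a - 2 \<longrightarrow> alpha S cup s i p \<le> alpha S cup s j p))
       \<and> alpha_vec S cup s a ` S \<subseteq> T_set a b
       \<and> (\<forall>x\<in>S. \<forall>y\<in>S. \<forall>i. x < y \<and> s x y = i \<longrightarrow> alpha S cup s i x < alpha S cup s i y)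
       \<and> inj_on (alpha_vec S cup s a) S"
  using alpha_ge_1[OF assms(1)] alpha_le_pred[OF assms(1,3)] alpha_mono[OF assms(1)]
    alpha_vec_in_T_set[OF assms(1,3)] alpha_less_along_edge[OF assms(1,4)]
    inj_on_alpha_vec[OF assms(1,4)]
  by auto

end
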